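(* Let $M \ge 2$, $k_1,\dots,k_M$ positive integers, $\nu_1,\dots,\nu_M \in \mathbb{R}$, $x_{10},\dots,x_{M0} \in \mathbb{R}$, and $$0 < q_1 < p_1 < q_2 < p_2 < \cdots < q_M < p_M.$$ Let $\mathcal{M} = \{1,\dots,M\}$ and define $$P(z,\lambda) = \sum_{S \subseteq \mathcal{M}} C_S\lambda^{\nu_{S'}}z^{k_S},\qquad C_S = \Big(\prod_{(i,j)\in S\times S'} a_{ij}\Big)\Big(\prod_{j\in S'} b_j\Big),$$ where $S' = \mathcal{M}\setminus S$, $k_S = \sum_{i\in S}k_i$, $\nu_{S'} = \sum_{j\in S'}\nu_j$, and $$a_{ij} = \sqrt{\frac{(p_j-q_i)(q_j-p_i)}{(q_j-q_i)(p_j-p_i)}},\qquad b_j = \sqrt{\frac{q_j}{p_j}}\,e^{-ik_jx_{j0}}.$$ Then, provided $|\lambda| = 1$, all zeros of the polynomial $z \mapsto P(z,\lambda)$ lie in the open unit disk $\{z \in \mathbb{C} : |z| < 1\}$.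
   Context: For $|\lambda|=1$ and real exponents, powers of $\lambda$ are taken with a fixed argument: write $\lambda = e^{i\varphi}$ and set $\lambda^{\nu} = e^{i\nu\varphi}$, so that $\lambda^{\nu_{S'}} = \prod_{j\in S'}\lambda^{\nu_j}$. *)

theory Defs
  imports "HOL-Analysis.Analysis"
begin

definition a_coef :: "(nat \<Rightarrow> real) \<Rightarrow> (nat \<Rightarrow> real) \<Rightarrow> nat \<Rightarrow> nat \<Rightarrow> real" where
  "a_coef p q i j = sqrt (((p j - q i) * (q j - p i)) / ((q j - q i) * (p j - p i)))"

definition b_coef :: "(nat \<Rightarrow> real) \<Rightarrow> (nat \<Rightarrow> real) \<Rightarrow> (nat \<Rightarrow> nat) \<Rightarrow> (nat \<Rightarrow> real) \<Rightarrow> nat \<Rightarrow> complex" where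
  "b_coef p q k x0 j = complex_of_real (sqrt (q j / p j)) * exp (- \<i> * complex_of_real (real (k j) * x0 j))"

definition C_coef :: "nat \<Rightarrow> (nat \<Rightarrow> real) \<Rightarrow> (nat \<Rightarrow> real) \<Rightarrow> (nat \<Rightarrow> nat) \<Rightarrow> (nat \<Rightarrow> real) \<Rightarrow> nat set \<Rightarrow> complex" where
  "C_coef M p q k x0 S =
     (\<Prod>i\<in>S. \<Prod>j\<in>{1..M} - S. complex_of_real (a_coef p q i j)) *
     (\<Prod>j\<in>{1..M} - S. b_coef p q k x0 j)"

text \<open>lambda = exp(i phi), and lambda^nu := exp(i nu phi) (fixed argument phi).\<close>
definition lam_pow :: "real \<Rightarrow> real \<Rightarrow> complex" where
  "lam_pow \<phi> \<nu> = exp (\<i> * complex_of_real (\<nu> * \<phi>))"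

definition P_poly :: "nat \<Rightarrow> (nat \<Rightarrow> nat) \<Rightarrow> (nat \<Rightarrow> real) \<Rightarrow> (nat \<Rightarrow> real) \<Rightarrow> (nat \<Rightarrow> real)
    \<Rightarrow> (nat \<Rightarrow> real) \<Rightarrow> real \<Rightarrow> complex \<Rightarrow> complex" where
  "P_poly M k \<nu> p q x0 \<phi> z =
     (\<Sum>S\<in>Pow {1..M}. C_coef M p q k x0 S * lam_pow \<phi> (\<Sum>j\<in>{1..M} - S. \<nu> j) * z ^ (\<Sum>i\<in>S. k i))"

end

theory Submission
  imports Defs
begin

(* Write B_j = b_j lambda^nu_j. Dividing P by the product of the B_j and substituting
   Z_i = z^k_i / B_i turns P into the multiaffine polynomial
   sum_S (prod_{i in S, j notin S} a_ij) (prod_{i in S} Z_i), the Lee-Yang partition function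
   of the complete graph with couplings a_ij. The interlacing of the q_i and p_i puts every
   a_ij into [0, 1], so by the Lee-Yang circle theorem this polynomial has no zero with all
   |Z_i| > 1. As |B_j| = sqrt (q_j / p_j) < 1, every z with |z| >= 1 gives |Z_i| > 1.
   The circle theorem is proved by switching on the couplings one edge at a time; each step
   is a statement about bilinear polynomials in the two variables of the edge. *)

section \<open>Polynomials without roots outside the unit disk\<close>

lemma add_nonzero_if_norm_less:
  fixes x y :: "'a::real_normed_vector"
  assumes "norm x < norm y"
  shows "x + y \<noteq> 0"
  using assms by (metis add.inverse_unique norm_minus_cancel order_less_irrefl)

lemma norm_le_if_affine_no_root_outside_disk:
  fixes a b :: "'a::real_normed_field"
  assumes "b \<noteq> 0" and no_root: "\<And>y. 1 < norm y \<Longrightarrow> a + b * y \<noteq> 0"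
  shows "norm a \<le> norm b"
proof (rule ccontr)
  assume "\<not> norm a \<le> norm b"
  then have "1 < norm (- a / b)"
    using \<open>b \<noteq> 0\<close> by (simp add: norm_divide)
  moreover have "a + b * (- a / b) = 0"
    using \<open>b \<noteq> 0\<close> by simp
  ultimately show False
    using no_root by blast
qed

lemma norm_le_if_quadratic_no_root_outside_disk:
  fixes c0 c1 c2 :: complex
  assumes "c2 \<noteq> 0" and no_root: "\<And>t. 1 < norm t \<Longrightarrow> c2 * t\<^sup>2 + c1 * t + c0 \<noteq> 0"
  shows "norm c0 \<le> norm c2"
proof -
  define s where "s = csqrt (c1\<^sup>2 - 4 * c2 * c0)"
  define r1 where "r1 = (- c1 + s) / (2 * c2)"
  define r2 where "r2 = (- c1 - s) / (2 * c2)"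
  have s2: "s\<^sup>2 = c1\<^sup>2 - 4 * c2 * c0"
    by (simp add: s_def)
  have sum_roots: "r1 + r2 = - c1 / c2"
    using \<open>c2 \<noteq> 0\<close> unfolding r1_def r2_def by (simp add: field_simps)
  have prod_roots: "r1 * r2 = c0 / c2"
  proof -
    have "r1 * r2 = (c1\<^sup>2 - s\<^sup>2) / (4 * c2\<^sup>2)"
      unfolding r1_def r2_def by (simp add: field_simps power2_eq_square)
    also have "\<dots> = c0 / c2"
      unfolding s2 using \<open>c2 \<noteq> 0\<close> by (simp add: field_simps power2_eq_square)
    finally show ?thesis .
  qed
  have "c2 * t\<^sup>2 + c1 * t + c0 = c2 * ((t - r1) * (t - r2))" for t
  proof -
    have "(t - r1) * (t - r2) = t\<^sup>2 - (r1 + r2) * t + r1 * r2"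
      by (simp add: algebra_simps power2_eq_square)
    then show ?thesis
      using \<open>c2 \<noteq> 0\<close> by (simp add: sum_roots prod_roots field_simps)
  qed
  then have "norm r1 \<le> 1" "norm r2 \<le> 1"
    using no_root \<open>c2 \<noteq> 0\<close> by (metis mult_eq_0_iff right_minus_eq not_less)+
  moreover have "c0 = c2 * (r1 * r2)"
    using \<open>c2 \<noteq> 0\<close> by (simp add: prod_roots)
  ultimately show ?thesis
    by (simp add: norm_mult mult_left_le mult_le_one)
qed

lemma norm_one_add_mult_le_norm_add:
  fixes a :: real and t :: complex
  assumes "\<bar>a\<bar> \<le> 1" "1 < norm t"
  shows "norm (1 + of_real a * t) \<le> norm (of_real a + t)"
proof (rule power2_le_imp_le)
  have "(norm (of_real a + t))\<^sup>2 - (norm (1 + of_real a * t))\<^sup>2 = (1 - a\<^sup>2) * ((norm t)\<^sup>2 - 1)"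
    unfolding cmod_power2 by (simp add: power2_eq_square algebra_simps)
  moreover have "0 \<le> (1 - a\<^sup>2) * ((norm t)\<^sup>2 - 1)"
    using assms by (intro mult_nonneg_nonneg) (simp_all add: abs_square_le_1 one_le_power)
  ultimately show "(norm (1 + of_real a * t))\<^sup>2 \<le> (norm (of_real a + t))\<^sup>2"
    by linarith
qed simp

lemma norm_le_if_bilinear_no_root_outside_disk:
  fixes A B C D t :: complex
  assumes no_root_B: "\<And>y. 1 < norm y \<Longrightarrow> B + D * y \<noteq> 0"
    and no_root: "\<And>x y. 1 < norm x \<Longrightarrow> 1 < norm y \<Longrightarrow> A + B * x + C * y + D * x * y \<noteq> 0"
    and "1 < norm t"
  shows "norm (A + C * t) \<le> norm (B + D * t)"
proof (rule norm_le_if_affine_no_root_outside_disk)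
  show "B + D * t \<noteq> 0"
    using no_root_B \<open>1 < norm t\<close> .
  show "A + C * t + (B + D * t) * x \<noteq> 0" if "1 < norm x" for x
    using no_root[OF that \<open>1 < norm t\<close>] by (simp add: algebra_simps)
qed

lemma moebius_product_no_root_outside_disk:
  fixes A B C D x t :: complex and a :: real
  assumes no_root_B: "\<And>y. 1 < norm y \<Longrightarrow> B + D * y \<noteq> 0"
    and no_root: "\<And>x y. 1 < norm x \<Longrightarrow> 1 < norm y \<Longrightarrow> A + B * x + C * y + D * x * y \<noteq> 0"
    and "\<bar>a\<bar> \<le> 1" "1 < norm x" "1 < norm t"
  shows "(A + C * t) * (1 + of_real a * t) + (B + D * t) * (of_real a + t) * x \<noteq> 0"
proof (rule add_nonzero_if_norm_less)
  have "of_real a + t \<noteq> 0"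
    using assms(3,5) by (intro add_nonzero_if_norm_less) simp
  have "norm ((A + C * t) * (1 + of_real a * t)) \<le> norm (B + D * t) * norm (of_real a + t)"
    unfolding norm_mult
    using norm_le_if_bilinear_no_root_outside_disk[OF no_root_B no_root \<open>1 < norm t\<close>]
      norm_one_add_mult_le_norm_add[OF \<open>\<bar>a\<bar> \<le> 1\<close> \<open>1 < norm t\<close>]
    by (intro mult_mono) auto
  also have "\<dots> < norm ((B + D * t) * (of_real a + t) * x)"
    using no_root_B[OF \<open>1 < norm t\<close>] \<open>of_real a + t \<noteq> 0\<close> \<open>1 < norm x\<close> by (simp add: norm_mult)
  finally show "norm ((A + C * t) * (1 + of_real a * t)) < norm ((B + D * t) * (of_real a + t) * x)" .
qed

lemma bilinear_coupling_no_root_outside_disk: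
  fixes A B C D x y :: complex and a :: real
  assumes "D \<noteq> 0"
    and no_root_B: "\<And>y. 1 < norm y \<Longrightarrow> B + D * y \<noteq> 0"
    and no_root_C: "\<And>x. 1 < norm x \<Longrightarrow> C + D * x \<noteq> 0"
    and no_root: "\<And>x y. 1 < norm x \<Longrightarrow> 1 < norm y \<Longrightarrow> A + B * x + C * y + D * x * y \<noteq> 0"
    and "\<bar>a\<bar> \<le> 1" "1 < norm x" "1 < norm y"
  shows "A + of_real a * B * x + of_real a * C * y + D * x * y \<noteq> 0"
proof -
  define c2 where "c2 = of_real a * C + D * x"
  define c1 where "c1 = of_real a * A + C + B * x + of_real a * D * x"
  define c0 where "c0 = A + of_real a * B * x"
  have "c2 \<noteq> 0"
  proof -
    have "norm (of_real a * C) \<le> norm C"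
      using \<open>\<bar>a\<bar> \<le> 1\<close> by (simp add: norm_mult mult_left_le_one_le)
    also have "\<dots> \<le> norm D"
      using norm_le_if_affine_no_root_outside_disk[of D C] \<open>D \<noteq> 0\<close> no_root_C
      by (simp add: mult.commute)
    also have "\<dots> < norm (D * x)"
      using \<open>D \<noteq> 0\<close> \<open>1 < norm x\<close> by (simp add: norm_mult)
    finally show ?thesis
      unfolding c2_def by (rule add_nonzero_if_norm_less)
  qed
  have "norm c0 \<le> norm c2"
  proof (rule norm_le_if_quadratic_no_root_outside_disk[OF \<open>c2 \<noteq> 0\<close>])
    fix t :: complex
    assume "1 < norm t"
    then have "(A + C * t) * (1 + of_real a * t) + (B + D * t) * (of_real a + t) * x \<noteq> 0"
      using assms by (intro moebius_product_no_root_outside_disk) auto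
    then show "c2 * t\<^sup>2 + c1 * t + c0 \<noteq> 0"
      unfolding c2_def c1_def c0_def by (simp add: algebra_simps power2_eq_square)
  qed
  also have "\<dots> < norm (c2 * y)"
    using \<open>c2 \<noteq> 0\<close> \<open>1 < norm y\<close> by (simp add: norm_mult)
  finally have "c0 + c2 * y \<noteq> 0"
    by (rule add_nonzero_if_norm_less)
  then show ?thesis
    unfolding c0_def c2_def by (simp add: algebra_simps)
qed

section \<open>The Lee-Yang circle theorem\<close>

text \<open>multiaffine_part F T I c z is the coefficient of the monomial prod_{i in T} z_i in the
  multiaffine polynomial sum_{S \<subseteq> I} c S prod_{i in S} z_i after the variables in F are
  set to 0.\<close>
definition multiaffine_part ::
    "'a set \<Rightarrow> 'a set \<Rightarrow> 'a set \<Rightarrow> ('a set \<Rightarrow> complex) \<Rightarrow> ('a \<Rightarrow> complex) \<Rightarrow> complex" where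
  "multiaffine_part F T I c z = (\<Sum>S | S \<subseteq> I \<and> T \<subseteq> S \<and> S \<inter> F = {}. c S * (\<Prod>i\<in>S - T. z i))"

text \<open>Asking nonvanishing for every T, i.e. for the leading coefficients in the variables of T,
  is the strengthening that survives the edge-by-edge induction.\<close>
definition stable_outside_disk :: "'a set \<Rightarrow> ('a set \<Rightarrow> complex) \<Rightarrow> bool" where
  "stable_outside_disk I c \<longleftrightarrow>
     (\<forall>T z. T \<subseteq> I \<longrightarrow> (\<forall>i\<in>I - T. 1 < norm (z i)) \<longrightarrow> multiaffine_part {} T I c z \<noteq> 0)"

definition cut_factor :: "'a \<Rightarrow> 'a \<Rightarrow> real \<Rightarrow> 'a set \<Rightarrow> complex" where
  "cut_factor u v a S = (if (u \<in> S) \<noteq> (v \<in> S) then of_real a else 1)"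

lemma multiaffine_part_split:
  assumes "finite I" "u \<in> I" "u \<notin> T" "u \<notin> F"
  shows "multiaffine_part F T I c z =
    multiaffine_part (insert u F) T I c z + multiaffine_part F (insert u T) I c z * z u"
proof -
  let ?f = "\<lambda>S. c S * (\<Prod>i\<in>S - T. z i)"
  let ?without = "{S. S \<subseteq> I \<and> T \<subseteq> S \<and> S \<inter> insert u F = {}}"
  let ?with = "{S. S \<subseteq> I \<and> insert u T \<subseteq> S \<and> S \<inter> F = {}}"
  have "multiaffine_part F T I c z = sum ?f (?without \<union> ?with)"
    unfolding multiaffine_part_def using \<open>u \<notin> F\<close> by (intro sum.cong) auto
  also have "\<dots> = sum ?f ?without + sum ?f ?with"
    using \<open>finite I\<close> by (intro sum.union_disjoint) (auto intro: finite_subset[of _ "Pow I"])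
  also have "sum ?f ?with = (\<Sum>S\<in>?with. c S * (\<Prod>i\<in>S - insert u T. z i)) * z u"
    unfolding sum_distrib_right
  proof (rule sum.cong[OF refl])
    fix S
    assume "S \<in> ?with"
    then have "finite (S - T)" "u \<in> S - T" "S - T - {u} = S - insert u T"
      using \<open>finite I\<close> \<open>u \<notin> T\<close> finite_subset by auto
    then have "(\<Prod>i\<in>S - T. z i) = z u * (\<Prod>i\<in>S - insert u T. z i)"
      by (metis prod.remove)
    then show "?f S = c S * (\<Prod>i\<in>S - insert u T. z i) * z u"
      by (simp add: mult_ac)
  qed
  finally show ?thesis
    unfolding multiaffine_part_def .
qed

lemma multiaffine_part_split2:
  assumes "finite I" "u \<in> I" "v \<in> I" "u \<noteq> v" "u \<notin> T \<union> F" "v \<notin> T \<union> F"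
  shows "multiaffine_part F T I c z =
    multiaffine_part (insert u (insert v F)) T I c z
    + multiaffine_part (insert v F) (insert u T) I c z * z u
    + multiaffine_part (insert u F) (insert v T) I c z * z v
    + multiaffine_part F (insert u (insert v T)) I c z * z u * z v"
proof -
  have split_v: "multiaffine_part F' T' I c z =
      multiaffine_part (insert v F') T' I c z + multiaffine_part F' (insert v T') I c z * z v"
    if "v \<notin> T'" "v \<notin> F'" for F' T'
    using assms(1,3) that by (rule multiaffine_part_split)
  have "multiaffine_part F T I c z =
      multiaffine_part (insert u F) T I c z + multiaffine_part F (insert u T) I c z * z u"
    using assms by (intro multiaffine_part_split) auto
  also have "\<dots> = multiaffine_part (insert v (insert u F)) T I c z
      + multiaffine_part (insert u F) (insert v T) I c z * z v
      + (multiaffine_part (insert v F) (insert u T) I c z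
         + multiaffine_part F (insert v (insert u T)) I c z * z v) * z u"
    using assms by (simp add: split_v[of T "insert u F"] split_v[of "insert u T" F])
  finally show ?thesis
    by (simp add: insert_commute algebra_simps)
qed

lemma multiaffine_part_cong:
  assumes "\<And>i. i \<in> I - T - F \<Longrightarrow> z i = z' i"
  shows "multiaffine_part F T I c z = multiaffine_part F T I c z'"
  unfolding multiaffine_part_def
proof (rule sum.cong[OF refl])
  fix S
  assume "S \<in> {S. S \<subseteq> I \<and> T \<subseteq> S \<and> S \<inter> F = {}}"
  then have "(\<Prod>i\<in>S - T. z i) = (\<Prod>i\<in>S - T. z' i)"
    using assms by (intro prod.cong) auto
  then show "c S * (\<Prod>i\<in>S - T. z i) = c S * (\<Prod>i\<in>S - T. z' i)"
    by simp
qed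

lemma multiaffine_part_mult_cut_factor:
  assumes "u \<in> T \<union> F" "v \<in> T \<union> F"
  shows "multiaffine_part F T I (\<lambda>S. c S * cut_factor u v a S) z =
    cut_factor u v a T * multiaffine_part F T I c z"
  unfolding multiaffine_part_def sum_distrib_left
proof (rule sum.cong[OF refl])
  fix S
  assume "S \<in> {S. S \<subseteq> I \<and> T \<subseteq> S \<and> S \<inter> F = {}}"
  then have "cut_factor u v a S = cut_factor u v a T"
    using assms unfolding cut_factor_def by auto
  then show "c S * cut_factor u v a S * (\<Prod>i\<in>S - T. z i) =
      cut_factor u v a T * (c S * (\<Prod>i\<in>S - T. z i))"
    by simp
qed

lemma stable_outside_disk_const_one:
  assumes "finite I"
  shows "stable_outside_disk I (\<lambda>_. 1)"
  unfolding stable_outside_disk_def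
proof (intro allI impI)
  fix T and z :: "'a \<Rightarrow> complex"
  assume "T \<subseteq> I" and z: "\<forall>i\<in>I - T. 1 < norm (z i)"
  have "multiaffine_part {} T I (\<lambda>_. 1) z = (\<Sum>X\<in>Pow (I - T). (\<Prod>i\<in>X. z i) * (\<Prod>i\<in>I - T - X. 1))"
    unfolding multiaffine_part_def
    by (rule sum.reindex_bij_witness[of _ "\<lambda>X. X \<union> T" "\<lambda>S. S - T"]) (use \<open>T \<subseteq> I\<close> in auto)
  also have "\<dots> = (\<Prod>i\<in>I - T. z i + 1)"
    using \<open>finite I\<close> by (simp add: prod_add)
  also have "\<dots> \<noteq> 0"
    using \<open>finite I\<close> z add_nonzero_if_norm_less[of 1 "z _"] by (auto simp: add.commute)
  finally show "multiaffine_part {} T I (\<lambda>_. 1) z \<noteq> 0" .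
qed

lemma stable_outside_disk_affine_no_root:
  assumes "stable_outside_disk I c" "finite I" "T \<subseteq> I" "v \<in> I - T"
    and "\<forall>i\<in>I - insert v T. 1 < norm (z i)" "1 < norm y"
  shows "multiaffine_part {v} T I c z + multiaffine_part {} (insert v T) I c z * y \<noteq> 0"
proof -
  have "multiaffine_part {} T I c (z(v := y)) \<noteq> 0"
    using assms unfolding stable_outside_disk_def by auto
  moreover have "multiaffine_part {} T I c (z(v := y)) =
      multiaffine_part {v} T I c z + multiaffine_part {} (insert v T) I c z * y"
  proof -
    have "multiaffine_part {v} T I c (z(v := y)) = multiaffine_part {v} T I c z"
      "multiaffine_part {} (insert v T) I c (z(v := y)) = multiaffine_part {} (insert v T) I c z"
      by (rule multiaffine_part_cong; simp)+
    then show ?thesis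
      using assms(2,4) multiaffine_part_split[of I v T "{}" c "z(v := y)"] by simp
  qed
  ultimately show ?thesis
    by simp
qed

lemma stable_outside_disk_norm_le:
  assumes "stable_outside_disk I c" "finite I" "T \<subseteq> I" "v \<in> I - T"
    and "\<forall>i\<in>I - insert v T. 1 < norm (z i)"
  shows "norm (multiaffine_part {v} T I c z) \<le> norm (multiaffine_part {} (insert v T) I c z)"
proof (rule norm_le_if_affine_no_root_outside_disk)
  show "multiaffine_part {} (insert v T) I c z \<noteq> 0"
    using assms unfolding stable_outside_disk_def by auto
qed (use stable_outside_disk_affine_no_root[OF assms] in blast)

lemma stable_outside_disk_bilinear_no_root:
  assumes "stable_outside_disk I c" "finite I" "T \<subseteq> I" "u \<in> I - T" "v \<in> I - T" "u \<noteq> v"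
    and "\<forall>i\<in>I - insert u (insert v T). 1 < norm (z i)" "1 < norm x" "1 < norm y"
  shows "multiaffine_part {u, v} T I c z
    + multiaffine_part {v} (insert u T) I c z * x
    + multiaffine_part {u} (insert v T) I c z * y
    + multiaffine_part {} (insert u (insert v T)) I c z * x * y \<noteq> 0"
proof -
  let ?z = "z(u := x, v := y)"
  have "multiaffine_part {} T I c ?z \<noteq> 0"
    using assms unfolding stable_outside_disk_def by auto
  moreover have "multiaffine_part {} T I c ?z =
      multiaffine_part {u, v} T I c z
      + multiaffine_part {v} (insert u T) I c z * x
      + multiaffine_part {u} (insert v T) I c z * y
      + multiaffine_part {} (insert u (insert v T)) I c z * x * y"
  proof -
    have "multiaffine_part {u, v} T I c ?z = multiaffine_part {u, v} T I c z"
      "multiaffine_part {v} (insert u T) I c ?z = multiaffine_part {v} (insert u T) I c z"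
      "multiaffine_part {u} (insert v T) I c ?z = multiaffine_part {u} (insert v T) I c z"
      "multiaffine_part {} (insert u (insert v T)) I c ?z =
         multiaffine_part {} (insert u (insert v T)) I c z"
      by (rule multiaffine_part_cong; simp)+
    then show ?thesis
      using assms(2,4-6) multiaffine_part_split2[of I u v T "{}" c ?z] by simp
  qed
  ultimately show ?thesis
    by simp
qed

lemma cut_factor_commute: "cut_factor u v a = cut_factor v u a"
  unfolding cut_factor_def by auto

lemma multiaffine_part_cut_factor_nonzero_one_endpoint:
  assumes "stable_outside_disk I c" "finite I" "T \<subseteq> I" "u \<in> T" "v \<in> I - T"
    and "\<bar>a\<bar> \<le> 1" and z: "\<forall>i\<in>I - T. 1 < norm (z i)"
  shows "multiaffine_part {} T I (\<lambda>S. c S * cut_factor u v a S) z \<noteq> 0"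
proof -
  define G0 where "G0 = multiaffine_part {v} T I c z"
  define G1 where "G1 = multiaffine_part {} (insert v T) I c z"
  have "G1 \<noteq> 0"
    using assms unfolding G1_def stable_outside_disk_def by auto
  have "norm (of_real a * G0) \<le> norm G0"
    using \<open>\<bar>a\<bar> \<le> 1\<close> by (simp add: norm_mult mult_left_le_one_le)
  also have "\<dots> \<le> norm G1"
    unfolding G0_def G1_def using assms by (intro stable_outside_disk_norm_le) auto
  also have "\<dots> < norm (G1 * z v)"
    using \<open>G1 \<noteq> 0\<close> z \<open>v \<in> I - T\<close> by (simp add: norm_mult)
  finally have "of_real a * G0 + G1 * z v \<noteq> 0"
    by (rule add_nonzero_if_norm_less)
  moreover have "multiaffine_part {} T I (\<lambda>S. c S * cut_factor u v a S) z = of_real a * G0 + G1 * z v"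
  proof -
    have "multiaffine_part {v} T I (\<lambda>S. c S * cut_factor u v a S) z = of_real a * G0"
      "multiaffine_part {} (insert v T) I (\<lambda>S. c S * cut_factor u v a S) z = G1"
      using assms(4,5) unfolding G0_def G1_def
      by (subst multiaffine_part_mult_cut_factor; auto simp: cut_factor_def)+
    then show ?thesis
      using assms(2,4,5) multiaffine_part_split[of I v T "{}" "\<lambda>S. c S * cut_factor u v a S" z]
      by simp
  qed
  ultimately show ?thesis
    by simp
qed

lemma multiaffine_part_cut_factor_nonzero_no_endpoint:
  assumes stable: "stable_outside_disk I c" "finite I" "T \<subseteq> I"
    and uv: "u \<in> I - T" "v \<in> I - T" "u \<noteq> v"
    and "\<bar>a\<bar> \<le> 1" and z: "\<forall>i\<in>I - T. 1 < norm (z i)"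
  shows "multiaffine_part {} T I (\<lambda>S. c S * cut_factor u v a S) z \<noteq> 0"
proof -
  define A where "A = multiaffine_part {u, v} T I c z"
  define B where "B = multiaffine_part {v} (insert u T) I c z"
  define C where "C = multiaffine_part {u} (insert v T) I c z"
  define D where "D = multiaffine_part {} (insert u (insert v T)) I c z"
  have "D \<noteq> 0"
    using assms unfolding D_def stable_outside_disk_def by auto
  moreover have "B + D * y \<noteq> 0" if "1 < norm y" for y
    using stable_outside_disk_affine_no_root[OF stable(1,2), of "insert u T" v z y] stable(3) uv z that
    by (simp add: B_def D_def insert_commute)
  moreover have "C + D * x \<noteq> 0" if "1 < norm x" for x
    using stable_outside_disk_affine_no_root[OF stable(1,2), of "insert v T" u z x] stable(3) uv z that
    by (simp add: C_def D_def)
  moreover have "A + B * x + C * y + D * x * y \<noteq> 0" if "1 < norm x" "1 < norm y" for x y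
    using stable_outside_disk_bilinear_no_root[OF stable, of u v z x y] uv z that
    by (simp add: A_def B_def C_def D_def)
  ultimately have "A + of_real a * B * z u + of_real a * C * z v + D * z u * z v \<noteq> 0"
    using \<open>\<bar>a\<bar> \<le> 1\<close> z uv by (intro bilinear_coupling_no_root_outside_disk) auto
  moreover have "multiaffine_part {} T I (\<lambda>S. c S * cut_factor u v a S) z =
      A + of_real a * B * z u + of_real a * C * z v + D * z u * z v"
  proof -
    have "multiaffine_part {u, v} T I (\<lambda>S. c S * cut_factor u v a S) z = A"
      "multiaffine_part {v} (insert u T) I (\<lambda>S. c S * cut_factor u v a S) z = of_real a * B"
      "multiaffine_part {u} (insert v T) I (\<lambda>S. c S * cut_factor u v a S) z = of_real a * C"
      "multiaffine_part {} (insert u (insert v T)) I (\<lambda>S. c S * cut_factor u v a S) z = D"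
      using uv unfolding A_def B_def C_def D_def
      by (subst multiaffine_part_mult_cut_factor; auto simp: cut_factor_def)+
    then show ?thesis
      using stable(2) uv multiaffine_part_split2[of I u v T "{}" "\<lambda>S. c S * cut_factor u v a S" z]
      by simp
  qed
  ultimately show ?thesis
    by simp
qed

lemma stable_outside_disk_mult_cut_factor:
  assumes "stable_outside_disk I c" "finite I" "u \<in> I" "v \<in> I" "u \<noteq> v" "\<bar>a\<bar> \<le> 1"
  shows "stable_outside_disk I (\<lambda>S. c S * cut_factor u v a S)"
  unfolding stable_outside_disk_def
proof (intro allI impI)
  fix T and z :: "'a \<Rightarrow> complex"
  assume T: "T \<subseteq> I" and z: "\<forall>i\<in>I - T. 1 < norm (z i)"
  consider "u \<in> T" "v \<in> T" | "u \<in> T" "v \<notin> T" | "u \<notin> T" "v \<in> T" | "u \<notin> T" "v \<notin> T"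
    by blast
  then show "multiaffine_part {} T I (\<lambda>S. c S * cut_factor u v a S) z \<noteq> 0"
  proof cases
    case 1
    have "multiaffine_part {} T I c z \<noteq> 0"
      using assms(1) T z unfolding stable_outside_disk_def by blast
    with 1 show ?thesis
      by (subst multiaffine_part_mult_cut_factor) (auto simp: cut_factor_def)
  next
    case 2
    then show ?thesis
      using assms T z by (intro multiaffine_part_cut_factor_nonzero_one_endpoint) auto
  next
    case 3
    then have "multiaffine_part {} T I (\<lambda>S. c S * cut_factor v u a S) z \<noteq> 0"
      using assms T z by (intro multiaffine_part_cut_factor_nonzero_one_endpoint) auto
    then show ?thesis
      by (simp add: cut_factor_commute[of v u a])
  next
    case 4
    then show ?thesis
      using assms T z by (intro multiaffine_part_cut_factor_nonzero_no_endpoint) auto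
  qed
qed

definition cut_weight :: "('a \<Rightarrow> 'a \<Rightarrow> real) \<Rightarrow> ('a \<times> 'a) set \<Rightarrow> 'a set \<Rightarrow> complex" where
  "cut_weight w E S = (\<Prod>(u, v)\<in>E. cut_factor u v (w u v) S)"

theorem stable_outside_disk_cut_weight:
  assumes "finite I" "finite E" "E \<subseteq> {(u, v). u \<in> I \<and> v \<in> I \<and> u \<noteq> v}"
    and "\<forall>(u, v)\<in>E. \<bar>w u v\<bar> \<le> 1"
  shows "stable_outside_disk I (cut_weight w E)"
  using assms(2-4)
proof (induction E rule: finite_induct)
  case empty
  then show ?case
    using stable_outside_disk_const_one[OF \<open>finite I\<close>] by (simp add: cut_weight_def)
next
  case (insert e E)
  obtain u v where e: "e = (u, v)"
    by force
  have "cut_weight w (insert e E) = (\<lambda>S. cut_weight w E S * cut_factor u v (w u v) S)"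
    using insert.hyps e by (intro ext) (simp add: cut_weight_def mult.commute)
  moreover have "stable_outside_disk I (cut_weight w E)"
    using insert by simp
  ultimately show ?case
    using insert.prems e \<open>finite I\<close> by (simp add: stable_outside_disk_mult_cut_factor)
qed

lemma cut_weight_ordered_pairs:
  fixes w :: "'a::linorder \<Rightarrow> 'a \<Rightarrow> real"
  assumes "finite I" "S \<subseteq> I" and sym: "\<And>i j. i \<in> I \<Longrightarrow> j \<in> I \<Longrightarrow> w i j = w j i"
  shows "cut_weight w {(i, j). i \<in> I \<and> j \<in> I \<and> i < j} S = (\<Prod>i\<in>S. \<Prod>j\<in>I - S. of_real (w i j))"
proof -
  let ?cut = "{(i, j). i \<in> I \<and> j \<in> I \<and> i < j \<and> (i \<in> S) \<noteq> (j \<in> S)}"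
  have "finite {(i, j). i \<in> I \<and> j \<in> I \<and> i < j}"
    using \<open>finite I\<close> by (auto intro: finite_subset[of _ "I \<times> I"])
  then have "cut_weight w {(i, j). i \<in> I \<and> j \<in> I \<and> i < j} S = (\<Prod>(i, j)\<in>?cut. of_real (w i j))"
    unfolding cut_weight_def cut_factor_def
    by (intro prod.mono_neutral_cong_right) (auto split: if_splits)
  also have "\<dots> = (\<Prod>(i, j)\<in>S \<times> (I - S). of_real (w i j))"
    using \<open>S \<subseteq> I\<close>
    by (intro prod.reindex_bij_witness[of _ "\<lambda>(i, j). (min i j, max i j)"
          "\<lambda>(i, j). if i \<in> S then (i, j) else (j, i)"])
      (auto simp: min_def max_def sym le_less split: if_splits)
  also have "\<dots> = (\<Prod>i\<in>S. \<Prod>j\<in>I - S. of_real (w i j))"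
    by (simp add: prod.cartesian_product)
  finally show ?thesis .
qed

section \<open>The polynomial P\<close>

lemma one_less_norm_power_divide:
  fixes z b :: "'a::real_normed_field"
  assumes "1 \<le> norm z" "0 < norm b" "norm b < 1"
  shows "1 < norm (z ^ n / b)"
proof -
  have "1 < 1 / norm b"
    using assms(2,3) by simp
  also have "\<dots> \<le> norm z ^ n / norm b"
    using assms(1,2) by (intro divide_right_mono) (simp_all add: one_le_power)
  finally show ?thesis
    by (simp add: norm_divide norm_power)
qed

lemma interlacing_p_less_q:
  fixes p q :: "nat \<Rightarrow> real"
  assumes "\<forall>i\<in>{1..M}. q i < p i" "\<forall>i. 1 \<le> i \<and> i < M \<longrightarrow> p i < q (i + 1)"
    and "1 \<le> i" "i < j" "j \<le> M"
  shows "p i < q j"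
  using assms(4,5)
proof (induction j)
  case (Suc j)
  show ?case
  proof (cases "i = j")
    case True
    then show ?thesis
      using assms(2,3) Suc.prems by auto
  next
    case False
    then have "p i < q j" "q j < p j" "p j < q (Suc j)"
      using Suc assms by auto
    then show ?thesis
      by linarith
  qed
qed simp

lemma interlacing_q_pos:
  fixes p q :: "nat \<Rightarrow> real"
  assumes "0 < q 1" "\<forall>i\<in>{1..M}. q i < p i" "\<forall>i. 1 \<le> i \<and> i < M \<longrightarrow> p i < q (i + 1)"
    and "j \<in> {1..M}"
  shows "0 < q j"
proof (cases "j = 1")
  case False
  then have "q 1 < p 1" "p 1 < q j"
    using assms(2-4) interlacing_p_less_q[of M q p 1 j] by auto
  then show ?thesis
    using assms(1) by linarith
qed (use assms(1) in simp)

lemma a_coef_sym: "a_coef p q i j = a_coef p q j i"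
  unfolding a_coef_def by (simp add: algebra_simps)

lemma abs_a_coef_le_one:
  assumes "q i < p i" "p i < q j" "q j < p j"
  shows "\<bar>a_coef p q i j\<bar> \<le> 1"
proof -
  define N where "N = (p j - q i) * (q j - p i)"
  define D where "D = (q j - q i) * (p j - p i)"
  have "0 < N" "0 < D"
    using assms unfolding N_def D_def by (auto intro: mult_pos_pos)
  have "D - N = (p j - q j) * (p i - q i)"
    unfolding N_def D_def by (simp add: algebra_simps)
  moreover have "0 < (p j - q j) * (p i - q i)"
    using assms by simp
  ultimately have "N \<le> D"
    by linarith
  with \<open>0 < N\<close> \<open>0 < D\<close> show ?thesis
    unfolding a_coef_def N_def[symmetric] D_def[symmetric] by simp
qed

lemma norm_b_coef:
  assumes "0 \<le> q j / p j"
  shows "norm (b_coef p q k x0 j) = sqrt (q j / p j)"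
proof -
  have "norm (exp (- \<i> * complex_of_real (real (k j) * x0 j))) = 1"
    using norm_exp_i_times[of "- (real (k j) * x0 j)"] by simp
  then show ?thesis
    using assms unfolding b_coef_def by (simp add: norm_mult)
qed

lemma norm_lam_pow: "norm (lam_pow \<phi> \<nu>) = 1"
  unfolding lam_pow_def by (rule norm_exp_i_times)

lemma norm_b_coef_mult_lam_pow_bounds:
  assumes "0 < q j" "q j < p j"
  shows "0 < norm (b_coef p q k x0 j * lam_pow \<phi> \<nu>)" "norm (b_coef p q k x0 j * lam_pow \<phi> \<nu>) < 1"
proof -
  have "0 < q j / p j" "q j / p j < 1"
    using assms by simp_all
  then show "0 < norm (b_coef p q k x0 j * lam_pow \<phi> \<nu>)" "norm (b_coef p q k x0 j * lam_pow \<phi> \<nu>) < 1"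
    by (simp_all add: norm_mult norm_b_coef norm_lam_pow)
qed

lemma lam_pow_sum:
  assumes "finite A"
  shows "lam_pow \<phi> (\<Sum>j\<in>A. \<nu> j) = (\<Prod>j\<in>A. lam_pow \<phi> (\<nu> j))"
proof -
  have "\<i> * complex_of_real ((\<Sum>j\<in>A. \<nu> j) * \<phi>) = (\<Sum>j\<in>A. \<i> * complex_of_real (\<nu> j * \<phi>))"
    by (simp add: sum_distrib_left sum_distrib_right)
  then show ?thesis
    unfolding lam_pow_def using assms by (simp add: exp_sum)
qed

lemma P_poly_eq_multiaffine_part:
  fixes M :: nat and k :: "nat \<Rightarrow> nat" and \<nu> p q x0 :: "nat \<Rightarrow> real" and \<phi> :: real
    and z :: complex
  defines "B \<equiv> \<lambda>j. b_coef p q k x0 j * lam_pow \<phi> (\<nu> j)"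
  assumes B_nonzero: "\<And>j. j \<in> {1..M} \<Longrightarrow> B j \<noteq> 0"
  shows "P_poly M k \<nu> p q x0 \<phi> z =
    (\<Prod>j\<in>{1..M}. B j) * multiaffine_part {} {} {1..M}
      (cut_weight (a_coef p q) {(i, j). i \<in> {1..M} \<and> j \<in> {1..M} \<and> i < j}) (\<lambda>i. z ^ k i / B i)"
proof -
  let ?I = "{1..M}"
  let ?c = "cut_weight (a_coef p q) {(i, j). i \<in> ?I \<and> j \<in> ?I \<and> i < j}"
  have "C_coef M p q k x0 S * lam_pow \<phi> (\<Sum>j\<in>?I - S. \<nu> j) * z ^ (\<Sum>i\<in>S. k i) =
      (\<Prod>j\<in>?I. B j) * (?c S * (\<Prod>i\<in>S. z ^ k i / B i))" if "S \<subseteq> ?I" for S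
  proof -
    have "?c S = (\<Prod>i\<in>S. \<Prod>j\<in>?I - S. complex_of_real (a_coef p q i j))"
      using that by (intro cut_weight_ordered_pairs) (simp_all add: a_coef_sym)
    moreover have "(\<Prod>j\<in>?I. B j) = (\<Prod>j\<in>?I - S. B j) * (\<Prod>j\<in>S. B j)"
      using that by (intro prod.subset_diff) simp_all
    moreover have "(\<Prod>j\<in>S. B j) * (\<Prod>i\<in>S. z ^ k i / B i) = (\<Prod>i\<in>S. z ^ k i)"
      using that B_nonzero by (simp add: prod.distrib[symmetric] subset_iff)
    moreover have "(\<Prod>j\<in>?I - S. B j) =
        (\<Prod>j\<in>?I - S. b_coef p q k x0 j) * lam_pow \<phi> (\<Sum>j\<in>?I - S. \<nu> j)"
      by (simp add: B_def prod.distrib lam_pow_sum)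
    ultimately show ?thesis
      unfolding C_coef_def power_sum by (simp add: mult_ac)
  qed
  then show ?thesis
    unfolding P_poly_def multiaffine_part_def sum_distrib_left by (intro sum.cong) auto
qed

lemma stable_outside_disk_a_coef:
  fixes p q :: "nat \<Rightarrow> real"
  assumes "\<forall>i\<in>{1..M}. q i < p i" "\<forall>i. 1 \<le> i \<and> i < M \<longrightarrow> p i < q (i + 1)"
  shows "stable_outside_disk {1..M} (cut_weight (a_coef p q) {(i, j). i \<in> {1..M} \<and> j \<in> {1..M} \<and> i < j})"
  using assms interlacing_p_less_q[OF assms]
  by (intro stable_outside_disk_cut_weight)
    (auto intro!: abs_a_coef_le_one intro: finite_subset[of _ "{1..M} \<times> {1..M}"])

theorem theorem3:
  fixes M :: nat and k :: "nat \<Rightarrow> nat" and \<nu> p q x0 :: "nat \<Rightarrow> real" and \<phi> :: real and z :: complex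
  assumes "M \<ge> 2"
    and "\<forall>i\<in>{1..M}. k i > 0"
    and "0 < q 1"
    and "\<forall>i\<in>{1..M}. q i < p i"
    and "\<forall>i. 1 \<le> i \<and> i < M \<longrightarrow> p i < q (i + 1)"
    and "P_poly M k \<nu> p q x0 \<phi> z = 0"
  shows "norm z < 1"
proof (rule ccontr)
  assume "\<not> norm z < 1"
  let ?I = "{1..M}"
  let ?c = "cut_weight (a_coef p q) {(i, j). i \<in> ?I \<and> j \<in> ?I \<and> i < j}"
  define B where "B j = b_coef p q k x0 j * lam_pow \<phi> (\<nu> j)" for j
  have B_bounds: "0 < norm (B j)" "norm (B j) < 1" if "j \<in> ?I" for j
    using that assms(4) interlacing_q_pos[OF assms(3-5)] unfolding B_def
    by (blast intro: norm_b_coef_mult_lam_pow_bounds)+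
  have "1 < norm (z ^ k i / B i)" if "i \<in> ?I" for i
    using B_bounds[OF that] \<open>\<not> norm z < 1\<close> by (intro one_less_norm_power_divide) auto
  then have "multiaffine_part {} {} ?I ?c (\<lambda>i. z ^ k i / B i) \<noteq> 0"
    using stable_outside_disk_a_coef[OF assms(4,5)] unfolding stable_outside_disk_def by simp
  moreover have "(\<Prod>j\<in>?I. B j) \<noteq> 0"
    using B_bounds by fastforce
  ultimately have "P_poly M k \<nu> p q x0 \<phi> z \<noteq> 0"
    using B_bounds(1) unfolding B_def by (subst P_poly_eq_multiaffine_part) auto
  with assms(6) show False
    by contradiction
qed

end
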